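(* Let $\Gamma$ be a finite Abelian group (written additively, identity $0$) and let $R, B$ be disjoint inverse-closed subsets of $\Gamma$ not containing $0$. Let $G = \mathrm{Cay}(\Gamma, B)$ have all edges coloured $1$ and $H = \mathrm{Cay}(\Gamma, R)$ have all edges coloured $2$, and colour $\mathrm{Cay}(\Gamma, B \cup R)$ by giving each edge the colour it has in $G$ or in $H$. Then in $\mathrm{Cay}(\Gamma, B \cup R)$, for every $v \in \Gamma$: (i) $\deg_1(v) = \deg^G(v)$ and $\deg_2(v) = \deg^H(v)$; (ii) $e_1[v] - e_2[v] = \left(e_1^G[v] - e_2^H[v]\right) + \left(e_2^H(N^G[v]) - e_1^G(N^H[v])\right)$; (iii) if moreover $(R + B) \cap R = \emptyset$ and $e_1^G[v] > e_2^H[v]$, then $e_1[v] > e_2[v]$.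
   Context: For a group $\Gamma$ and an inverse-closed subset $S$ not containing the identity, the Cayley graph $\mathrm{Cay}(\Gamma,S)$ has vertex set $\Gamma$ and edges $\{g,g+s\}$ for $g\in\Gamma$, $s\in S$. $R+B=\{r+b: r\in R, b\in B\}$. For an edge-coloured graph $X$, a set $S$ of vertices and a colour $j$, $e^X_j(S)$ is the number of edges coloured $j$ in the subgraph of $X$ induced by $S$; $N^X[v]$ is the closed neighbourhood of $v$ in $X$; $e^X_j[v]=e^X_j(N^X[v])$; $\deg_j(v)$ is the number of edges of colour $j$ at $v$. Quantities without superscript refer to $\mathrm{Cay}(\Gamma,B\cup R)$. *)

theory Defs
  imports Main
begin

text \<open>Edge set of the Cayley graph Cay(Gamma,S) on the group 'a (Gamma = UNIV);
  edges are unordered pairs {g, g+s}.\<close>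
definition cay_edges :: "'a::ab_group_add set \<Rightarrow> 'a set set" where
  "cay_edges S = {{g, g + s} | g s. s \<in> S}"

definition ecount :: "'a set set \<Rightarrow> ('a set \<Rightarrow> nat) \<Rightarrow> nat \<Rightarrow> 'a set \<Rightarrow> nat" where
  "ecount E c j S = card {e \<in> E. c e = j \<and> e \<subseteq> S}"

definition cnbhd :: "'a set set \<Rightarrow> 'a \<Rightarrow> 'a set" where
  "cnbhd E v = insert v {u. {v, u} \<in> E}"

definition ecount_at :: "'a set set \<Rightarrow> ('a set \<Rightarrow> nat) \<Rightarrow> nat \<Rightarrow> 'a \<Rightarrow> nat" where
  "ecount_at E c j v = ecount E c j (cnbhd E v)"

definition cdeg :: "'a set set \<Rightarrow> ('a set \<Rightarrow> nat) \<Rightarrow> nat \<Rightarrow> 'a \<Rightarrow> nat" where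
  "cdeg E c j v = card {e \<in> E. v \<in> e \<and> c e = j}"

definition gdeg :: "'a set set \<Rightarrow> 'a \<Rightarrow> nat" where
  "gdeg E v = card {e \<in> E. v \<in> e}"

definition union_col :: "'a::ab_group_add set \<Rightarrow> 'a set \<Rightarrow> nat" where
  "union_col B e = (if e \<in> cay_edges B then 1 else 2)"

end

theory Submission
  imports Defs
begin

text \<open>In \<open>Cay(\<Gamma>, X)\<close> the closed neighbourhood of \<open>v\<close> is \<open>v + ({0} \<union> X)\<close>. Hence
  \<open>N[v] = N\<^sup>G[v] \<union> N\<^sup>H[v]\<close> with \<open>N\<^sup>G[v] \<inter> N\<^sup>H[v] = {v}\<close>, and an edge inside \<open>N[v]\<close> lies
  inside \<open>N\<^sup>G[v]\<close>, inside \<open>N\<^sup>H[v]\<close>, or joins \<open>v + B\<close> to \<open>v + R\<close>. Count edges of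
  \<open>Cay(\<Gamma>, D)\<close> inside \<open>v + S\<close> as half the number of pairs \<open>(x, y) \<in> S \<times> S\<close> with
  \<open>y - x \<in> D\<close>. A pair \<open>(a, a') \<in> B \<times> B\<close> with \<open>a' - a \<in> R\<close> corresponds to the pair
  \<open>(a', a' - a) \<in> B \<times> R\<close>, whose difference \<open>-a\<close> lies in \<open>B\<close>; so the \<open>B\<close>-edges joining
  \<open>v + B\<close> to \<open>v + R\<close> number \<open>2 e\<^sub>R(N\<^sup>G[v])\<close>, and symmetrically. Therefore
  \<open>e\<^sub>1[v] = e\<^sub>1\<^sup>G[v] + e\<^sub>B(N\<^sup>H[v]) + 2 e\<^sub>R(N\<^sup>G[v])\<close> and
  \<open>e\<^sub>2[v] = e\<^sub>2\<^sup>H[v] + e\<^sub>R(N\<^sup>G[v]) + 2 e\<^sub>B(N\<^sup>H[v])\<close>, which gives (ii).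
  If \<open>(R + B) \<inter> R = {}\<close>, no \<open>B\<close>-edge lies inside \<open>N\<^sup>H[v]\<close>, and (iii) follows.\<close>

definition edges_within :: "'a set set \<Rightarrow> 'a set \<Rightarrow> nat" where
  "edges_within E S = card {e \<in> E. e \<subseteq> S}"

lemma ecount_eq_edges_within: "ecount E c j S = edges_within {e \<in> E. c e = j} S"
  unfolding ecount_def edges_within_def by (rule arg_cong[where f = card]) blast

lemma cdeg_eq_gdeg: "cdeg E c j v = gdeg {e \<in> E. c e = j} v"
  unfolding cdeg_def gdeg_def by (rule arg_cong[where f = card]) blast

lemma mem_cay_edges_iff:
  fixes D :: "'a::ab_group_add set"
  assumes "\<forall>s\<in>D. - s \<in> D"
  shows "{x, y} \<in> cay_edges D \<longleftrightarrow> y - x \<in> D"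
proof
  assume "{x, y} \<in> cay_edges D"
  then obtain g s where "{x, y} = {g, g + s}" "s \<in> D"
    unfolding cay_edges_def by blast
  then show "y - x \<in> D"
    using assms by (auto simp: doubleton_eq_iff)
next
  assume "y - x \<in> D"
  moreover have "{x, y} = {x, x + (y - x)}" by simp
  ultimately show "{x, y} \<in> cay_edges D"
    unfolding cay_edges_def by blast
qed

lemma cnbhd_cay_edges:
  fixes D :: "'a::ab_group_add set"
  assumes "\<forall>s\<in>D. - s \<in> D"
  shows "cnbhd (cay_edges D) v = (+) v ` insert 0 D"
proof -
  have "u \<in> (+) v ` D \<longleftrightarrow> u - v \<in> D" for u
    by (auto intro!: image_eqI[where x = "u - v"])
  then have "{u. {v, u} \<in> cay_edges D} = (+) v ` D"
    by (auto simp: mem_cay_edges_iff[OF assms])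
  then show ?thesis
    unfolding cnbhd_def by simp
qed

lemma cay_edges_Un: "cay_edges (B \<union> R) = cay_edges B \<union> cay_edges R"
  unfolding cay_edges_def by blast

lemma cay_edges_disjoint:
  fixes B R :: "'a::ab_group_add set"
  assumes "B \<inter> R = {}" and "\<forall>s\<in>R. - s \<in> R"
  shows "cay_edges B \<inter> cay_edges R = {}"
proof (rule equals0I)
  fix e assume e: "e \<in> cay_edges B \<inter> cay_edges R"
  then obtain g s where g: "e = {g, g + s}" "s \<in> B"
    unfolding cay_edges_def by blast
  then have "s \<in> R"
    using e mem_cay_edges_iff[OF assms(2), of g "g + s"] by simp
  then show False
    using g assms(1) by blast
qed

lemma union_col_class_1: "{e \<in> cay_edges (B \<union> R). union_col B e = 1} = cay_edges B"
  by (auto simp: union_col_def cay_edges_Un)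

lemma union_col_class_2:
  fixes B R :: "'a::ab_group_add set"
  assumes "B \<inter> R = {}" and "\<forall>s\<in>R. - s \<in> R"
  shows "{e \<in> cay_edges (B \<union> R). union_col B e = 2} = cay_edges R"
  using cay_edges_disjoint[OF assms] by (auto simp: union_col_def cay_edges_Un)

definition diff_count :: "'a::ab_group_add set \<Rightarrow> 'a set \<Rightarrow> 'a set \<Rightarrow> nat" where
  "diff_count X Y D = card {(x, y). x \<in> X \<and> y \<in> Y \<and> y - x \<in> D}"

lemma finite_diff_pairs:
  assumes "finite X" "finite Y"
  shows "finite {(x, y). x \<in> X \<and> y \<in> Y \<and> P x y}"
  by (rule finite_subset[of _ "X \<times> Y"]) (use assms in auto)

lemma diff_count_Un_left:
  assumes "finite X" "finite X'" "finite Y" "X \<inter> X' = {}"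
  shows "diff_count (X \<union> X') Y D = diff_count X Y D + diff_count X' Y D"
proof -
  have "{(x, y). x \<in> X \<union> X' \<and> y \<in> Y \<and> y - x \<in> D}
      = {(x, y). x \<in> X \<and> y \<in> Y \<and> y - x \<in> D} \<union> {(x, y). x \<in> X' \<and> y \<in> Y \<and> y - x \<in> D}"
    by auto
  then show ?thesis
    unfolding diff_count_def
    by (simp only:) (rule card_Un_disjoint, use assms in \<open>auto intro: finite_diff_pairs\<close>)
qed

lemma diff_count_Un_right:
  assumes "finite X" "finite Y" "finite Y'" "Y \<inter> Y' = {}"
  shows "diff_count X (Y \<union> Y') D = diff_count X Y D + diff_count X Y' D"
proof -
  have "{(x, y). x \<in> X \<and> y \<in> Y \<union> Y' \<and> y - x \<in> D}
      = {(x, y). x \<in> X \<and> y \<in> Y \<and> y - x \<in> D} \<union> {(x, y). x \<in> X \<and> y \<in> Y' \<and> y - x \<in> D}"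
    by auto
  then show ?thesis
    unfolding diff_count_def
    by (simp only:) (rule card_Un_disjoint, use assms in \<open>auto intro: finite_diff_pairs\<close>)
qed

lemma diff_count_commute:
  assumes "\<forall>s\<in>D. - s \<in> D"
  shows "diff_count X Y D = diff_count Y X D"
proof -
  have "y - x \<in> D \<longleftrightarrow> x - y \<in> D" for x y
    using assms minus_diff_eq by metis
  then have "{(x, y). x \<in> Y \<and> y \<in> X \<and> y - x \<in> D}
      = prod.swap ` {(x, y). x \<in> X \<and> y \<in> Y \<and> y - x \<in> D}"
    by auto
  then show ?thesis
    unfolding diff_count_def by (simp add: card_image)
qed

lemma diff_count_rotate: "diff_count X Y D = diff_count D Y X"
proof -
  have "{(d, y). d \<in> D \<and> y \<in> Y \<and> y - d \<in> X}
      = (\<lambda>(x, y). (y - x, y)) ` {(x, y). x \<in> X \<and> y \<in> Y \<and> y - x \<in> D}"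
  proof (rule set_eqI, rule iffI)
    fix p assume "p \<in> {(d, y). d \<in> D \<and> y \<in> Y \<and> y - d \<in> X}"
    then obtain d y where "p = (d, y)" "d \<in> D" "y \<in> Y" "y - d \<in> X" by blast
    then show "p \<in> (\<lambda>(x, y). (y - x, y)) ` {(x, y). x \<in> X \<and> y \<in> Y \<and> y - x \<in> D}"
      by (auto intro!: image_eqI[where x = "(y - d, y)"])
  qed auto
  moreover have "inj_on (\<lambda>(x, y). (y - x, y)) A" for A :: "('a \<times> 'a) set"
    by (auto simp: inj_on_def)
  ultimately show ?thesis
    unfolding diff_count_def by (simp add: card_image)
qed

lemma diff_count_translate: "diff_count ((+) v ` X) ((+) v ` Y) D = diff_count X Y D"
proof -
  have "{(x, y). x \<in> (+) v ` X \<and> y \<in> (+) v ` Y \<and> y - x \<in> D}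
      = (\<lambda>(x, y). (v + x, v + y)) ` {(x, y). x \<in> X \<and> y \<in> Y \<and> y - x \<in> D}"
    by (auto simp: image_iff)
  moreover have "inj_on (\<lambda>(x, y). (v + x, v + y)) A" for A :: "('a \<times> 'a) set"
    by (auto simp: inj_on_def)
  ultimately show ?thesis
    unfolding diff_count_def by (simp add: card_image)
qed

lemma diff_count_zero_left: "diff_count {0} Y D = card (Y \<inter> D)"
proof -
  have "{(x, y). x \<in> {0} \<and> y \<in> Y \<and> y - x \<in> D} = Pair 0 ` (Y \<inter> D)"
    by auto
  then show ?thesis
    unfolding diff_count_def by (simp add: card_image inj_on_def)
qed

lemma diff_count_eq_0:
  assumes "{x + d | x d. x \<in> X \<and> d \<in> D} \<inter> Y = {}"
  shows "diff_count X Y D = 0"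
proof -
  have "y \<notin> Y" if "x \<in> X" "y - x \<in> D" for x y
  proof
    assume "y \<in> Y"
    moreover have "y = x + (y - x)" by simp
    ultimately show False
      using assms that by blast
  qed
  then have "{(x, y). x \<in> X \<and> y \<in> Y \<and> y - x \<in> D} = {}"
    by auto
  then show ?thesis
    unfolding diff_count_def by (metis card.empty)
qed

lemma two_edges_within_cay_edges:
  fixes D :: "'a::ab_group_add set"
  assumes "finite S" and D: "\<forall>s\<in>D. - s \<in> D" "0 \<notin> D"
  shows "2 * edges_within (cay_edges D) S = diff_count S S D"
proof -
  let ?E = "{e \<in> cay_edges D. e \<subseteq> S}"
  let ?ends = "\<lambda>e. {(x, y). {x, y} = e}"
  have pairs: "{(x, y). x \<in> S \<and> y \<in> S \<and> y - x \<in> D} = (\<Union>e\<in>?E. ?ends e)"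
    using mem_cay_edges_iff[OF D(1)] by auto
  have ends_card: "card (?ends e) = 2" if edge: "e \<in> ?E" for e
  proof -
    obtain g s where e: "e = {g, g + s}" "s \<in> D"
      using edge unfolding cay_edges_def by blast
    then have "g \<noteq> g + s"
      using D(2) by auto
    moreover have "?ends e = {(g, g + s), (g + s, g)}"
      using e by (auto simp: doubleton_eq_iff)
    ultimately show ?thesis
      by simp
  qed
  then have "finite (?ends e)" if "e \<in> ?E" for e
    using that by (intro card_ge_0_finite) simp
  moreover have "finite ?E"
    using \<open>finite S\<close> by (auto intro: finite_subset[of _ "Pow S"])
  ultimately have "card (\<Union>e\<in>?E. ?ends e) = (\<Sum>e\<in>?E. card (?ends e))"
    by (intro card_UN_disjoint) auto
  also have "\<dots> = 2 * card ?E"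
    using ends_card by simp
  finally show ?thesis
    unfolding edges_within_def diff_count_def pairs by simp
qed

lemma diff_count_insert_0:
  fixes X D :: "'a::ab_group_add set"
  assumes "finite X" "0 \<notin> X" and D: "\<forall>s\<in>D. - s \<in> D" "0 \<notin> D"
  shows "diff_count (insert 0 X) (insert 0 X) D = diff_count X X D + 2 * card (X \<inter> D)"
proof -
  have split_left: "diff_count ({0} \<union> X) Y D = diff_count {0} Y D + diff_count X Y D"
    if "finite Y" for Y
    using assms that by (intro diff_count_Un_left) auto
  have split_right: "diff_count Y ({0} \<union> X) D = diff_count Y {0} D + diff_count Y X D"
    if "finite Y" for Y
    using assms that by (intro diff_count_Un_right) auto
  have "diff_count ({0} \<union> X) ({0} \<union> X) D
      = diff_count {0} {0} D + diff_count {0} X D + (diff_count X {0} D + diff_count X X D)"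
    using \<open>finite X\<close> by (simp only: split_left split_right finite_Un finite.emptyI finite.insertI add.assoc)
  then have "diff_count (insert 0 X) (insert 0 X) D
      = diff_count {0} {0} D + diff_count {0} X D + diff_count X {0} D + diff_count X X D"
    by simp
  moreover have "diff_count X {0} D = diff_count {0} X D"
    using diff_count_commute[OF D(1)] .
  ultimately show ?thesis
    using D(2) by (simp add: diff_count_zero_left)
qed

lemma two_edges_within_cnbhd:
  fixes X D :: "'a::ab_group_add set"
  assumes "finite X" and X: "\<forall>s\<in>X. - s \<in> X" "0 \<notin> X" and D: "\<forall>s\<in>D. - s \<in> D" "0 \<notin> D"
  shows "2 * edges_within (cay_edges D) (cnbhd (cay_edges X) v) = diff_count X X D + 2 * card (X \<inter> D)"
proof -
  have "2 * edges_within (cay_edges D) (cnbhd (cay_edges X) v)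
      = diff_count ((+) v ` insert 0 X) ((+) v ` insert 0 X) D"
    unfolding cnbhd_cay_edges[OF X(1)]
    using assms by (intro two_edges_within_cay_edges) auto
  also have "\<dots> = diff_count X X D + 2 * card (X \<inter> D)"
    unfolding diff_count_translate by (rule diff_count_insert_0[OF assms(1) X(2) D])
  finally show ?thesis .
qed

lemma edges_within_cnbhd_Un_diff_count:
  fixes B R D :: "'a::ab_group_add set"
  assumes "finite B" "finite R" "B \<inter> R = {}"
    and B: "\<forall>s\<in>B. - s \<in> B" "0 \<notin> B" and R: "\<forall>s\<in>R. - s \<in> R" "0 \<notin> R"
    and D: "\<forall>s\<in>D. - s \<in> D" "0 \<notin> D"
  shows "edges_within (cay_edges D) (cnbhd (cay_edges (B \<union> R)) v)
    = edges_within (cay_edges D) (cnbhd (cay_edges B) v)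
      + edges_within (cay_edges D) (cnbhd (cay_edges R) v) + diff_count B R D"
proof -
  have BR: "\<forall>s\<in>B \<union> R. - s \<in> B \<union> R" "0 \<notin> B \<union> R"
    using B R by auto
  have "diff_count (B \<union> R) (B \<union> R) D
      = diff_count B B D + diff_count R R D + diff_count B R D + diff_count R B D"
    using assms by (simp add: diff_count_Un_left diff_count_Un_right)
  moreover have "diff_count R B D = diff_count B R D"
    using diff_count_commute[OF D(1)] .
  moreover have "card ((B \<union> R) \<inter> D) = card (B \<inter> D) + card (R \<inter> D)"
    unfolding Int_Un_distrib2 using assms by (intro card_Un_disjoint) auto
  ultimately have "2 * edges_within (cay_edges D) (cnbhd (cay_edges (B \<union> R)) v)
      = 2 * edges_within (cay_edges D) (cnbhd (cay_edges B) v)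
        + 2 * edges_within (cay_edges D) (cnbhd (cay_edges R) v) + 2 * diff_count B R D"
    using assms BR by (simp add: two_edges_within_cnbhd)
  then show ?thesis
    by simp
qed

lemma diff_count_cross_eq_edges_within:
  fixes X Y :: "'a::ab_group_add set"
  assumes "finite X" "X \<inter> Y = {}"
    and X: "\<forall>s\<in>X. - s \<in> X" "0 \<notin> X" and Y: "\<forall>s\<in>Y. - s \<in> Y" "0 \<notin> Y"
  shows "diff_count X Y X = 2 * edges_within (cay_edges Y) (cnbhd (cay_edges X) v)"
proof -
  have "diff_count X Y X = diff_count Y X X"
    using diff_count_commute[OF X(1)] .
  also have "\<dots> = diff_count X X Y"
    by (rule diff_count_rotate)
  also have "\<dots> = 2 * edges_within (cay_edges Y) (cnbhd (cay_edges X) v)"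
    using two_edges_within_cnbhd[OF \<open>finite X\<close> X Y] \<open>X \<inter> Y = {}\<close> by simp
  finally show ?thesis .
qed

lemma edges_within_cnbhd_Un:
  fixes B R :: "'a::ab_group_add set"
  assumes "finite B" "finite R" "B \<inter> R = {}"
    and "\<forall>s\<in>B. - s \<in> B" "0 \<notin> B" and "\<forall>s\<in>R. - s \<in> R" "0 \<notin> R"
  shows "edges_within (cay_edges B) (cnbhd (cay_edges (B \<union> R)) v)
    = edges_within (cay_edges B) (cnbhd (cay_edges B) v)
      + edges_within (cay_edges B) (cnbhd (cay_edges R) v)
      + 2 * edges_within (cay_edges R) (cnbhd (cay_edges B) v)"
  using edges_within_cnbhd_Un_diff_count[OF assms assms(4,5)]
    diff_count_cross_eq_edges_within[OF assms(1,3-7)] by simp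

lemma edges_within_cnbhd_eq_0:
  fixes B R :: "'a::ab_group_add set"
  assumes "{r + b | r b. r \<in> R \<and> b \<in> B} \<inter> R = {}"
    and "finite R" "B \<inter> R = {}"
    and "\<forall>s\<in>B. - s \<in> B" "0 \<notin> B" and "\<forall>s\<in>R. - s \<in> R" "0 \<notin> R"
  shows "edges_within (cay_edges B) (cnbhd (cay_edges R) v) = 0"
  using two_edges_within_cnbhd[OF assms(2,6,7,4,5), of v] diff_count_eq_0[OF assms(1)] assms(3)
  by (simp add: Int_commute)

theorem proposition2p3:
  fixes B R :: "'a::{ab_group_add, finite} set" and v :: 'a
  assumes disj: "B \<inter> R = {}"
    and Binv: "\<forall>s\<in>B. - s \<in> B" and Rinv: "\<forall>s\<in>R. - s \<in> R"
    and B0: "0 \<notin> B" and R0: "0 \<notin> R"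
  shows "(cdeg (cay_edges (B \<union> R)) (union_col B) 1 v = gdeg (cay_edges B) v
      \<and> cdeg (cay_edges (B \<union> R)) (union_col B) 2 v = gdeg (cay_edges R) v)
    \<and> int (ecount_at (cay_edges (B \<union> R)) (union_col B) 1 v)
           - int (ecount_at (cay_edges (B \<union> R)) (union_col B) 2 v)
         = (int (ecount_at (cay_edges B) (\<lambda>_. 1) 1 v) - int (ecount_at (cay_edges R) (\<lambda>_. 2) 2 v))
           + (int (ecount (cay_edges R) (\<lambda>_. 2) 2 (cnbhd (cay_edges B) v))
              - int (ecount (cay_edges B) (\<lambda>_. 1) 1 (cnbhd (cay_edges R) v)))
    \<and> ({r + b | r b. r \<in> R \<and> b \<in> B} \<inter> R = {} \<longrightarrow>
         ecount_at (cay_edges B) (\<lambda>_. 1) 1 v > ecount_at (cay_edges R) (\<lambda>_. 2) 2 v \<longrightarrow>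
         ecount_at (cay_edges (B \<union> R)) (union_col B) 1 v > ecount_at (cay_edges (B \<union> R)) (union_col B) 2 v)"
proof -
  have disj': "R \<inter> B = {}"
    using disj by blast
  have B_split: "edges_within (cay_edges B) (cnbhd (cay_edges (B \<union> R)) v)
    = edges_within (cay_edges B) (cnbhd (cay_edges B) v)
      + edges_within (cay_edges B) (cnbhd (cay_edges R) v)
      + 2 * edges_within (cay_edges R) (cnbhd (cay_edges B) v)"
    using edges_within_cnbhd_Un[OF _ _ disj Binv B0 Rinv R0] by simp
  have R_split: "edges_within (cay_edges R) (cnbhd (cay_edges (B \<union> R)) v)
    = edges_within (cay_edges R) (cnbhd (cay_edges R) v)
      + edges_within (cay_edges R) (cnbhd (cay_edges B) v)
      + 2 * edges_within (cay_edges B) (cnbhd (cay_edges R) v)"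
    using edges_within_cnbhd_Un[OF _ _ disj' Rinv R0 Binv B0] by (simp add: Un_commute)
  have sumset_free: "edges_within (cay_edges B) (cnbhd (cay_edges R) v) = 0"
    if "{r + b | r b. r \<in> R \<and> b \<in> B} \<inter> R = {}"
    using edges_within_cnbhd_eq_0[OF that _ disj Binv B0 Rinv R0] by simp
  show ?thesis
    unfolding cdeg_eq_gdeg ecount_at_def ecount_eq_edges_within
      union_col_class_1 union_col_class_2[OF disj Rinv]
    using B_split R_split sumset_free by auto
qed

end
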